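(* Let $\lambda\in\mathbb C$ satisfy $\lambda^2+\lambda+1=0$ (so $\lambda^3=1$, $\lambda\neq1$), and let $G\subset\mathrm{Diff}(\mathbb C^2,0)$ be the subgroup generated by $f_1=f_2=f_3=f_4$, $f_5$, $f_6$, where, for $Z=(z_1,z_2)$, $f_1(Z)=(-z_1,\lambda z_2)$, $f_5(Z)=(-z_1+z_2^2,\lambda z_2)$, $f_6(Z)=(-z_1+\lambda^2z_2^2,\lambda z_2)$. Then $f_1\circ f_2\circ f_3\circ f_4\circ f_5\circ f_6=\mathrm{Id}$, the maps $f_1,\ldots,f_6$ are pairwise conjugate in $G$ (so $G$ is irreducible with basic set of generators $f_1,\ldots,f_6$), $G$ is infinite, and $G$ is not abelian and not analytically linearizable.
   Context: $\mathrm{Diff}(\mathbb C^2,0)$ denotes the group of germs at $0$ of holomorphic diffeomorphisms of $\mathbb C^2$ fixing $0$. A subgroup $G$ is irreducible if it admits a finite set of generators $f_1,\ldots,f_{\nu+1}$ (repetitions allowed) with $f_1\circ\cdots\circ f_{\nu+1}=\mathrm{Id}$ and such that for all $i,j$ there is $h\in G$ with $f_i\circ h=h\circ f_j$. *)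

theory Defs
  imports "HOL-Analysis.Analysis"
begin

type_synonym C2 = "complex \<times> complex"

definition cmat :: "complex \<Rightarrow> complex \<Rightarrow> complex \<Rightarrow> complex \<Rightarrow> C2 \<Rightarrow> C2" where
  "cmat a b c d = (\<lambda>(u, v). (a * u + b * v, c * u + d * v))"

definition holo2 :: "(C2 \<Rightarrow> C2) \<Rightarrow> C2 set \<Rightarrow> bool" where
  "holo2 f U \<longleftrightarrow> open U \<and>
     (\<forall>z\<in>U. \<exists>a b c d. (f has_derivative cmat a b c d) (at z))"

inductive_set gen_group :: "(C2 \<Rightarrow> C2) set \<Rightarrow> (C2 \<Rightarrow> C2) set" for S where
  gen_id: "id \<in> gen_group S"
| gen_mul: "g \<in> gen_group S \<Longrightarrow> s \<in> S \<Longrightarrow> s \<circ> g \<in> gen_group S"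
| gen_inv: "g \<in> gen_group S \<Longrightarrow> s \<in> S \<Longrightarrow> inv s \<circ> g \<in> gen_group S"

definition irreducible_group :: "(C2 \<Rightarrow> C2) set \<Rightarrow> bool" where
  "irreducible_group G \<longleftrightarrow> (\<exists>fs. fs \<noteq> [] \<and> (\<forall>f\<in>set fs. bij f \<and> f 0 = 0) \<and>
      gen_group (set fs) = G \<and> foldr (\<circ>) fs id = id \<and>
      (\<forall>f\<in>set fs. \<forall>g\<in>set fs. \<exists>h\<in>G. f \<circ> h = h \<circ> g))"

definition analytically_linearizable :: "(C2 \<Rightarrow> C2) set \<Rightarrow> bool" where
  "analytically_linearizable G \<longleftrightarrow>
     (\<exists>U \<phi> \<psi>. open U \<and> 0 \<in> U \<and> \<phi> 0 = 0 \<and> holo2 \<phi> U \<and> inj_on \<phi> U \<and>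
        open (\<phi> ` U) \<and> holo2 \<psi> (\<phi> ` U) \<and> (\<forall>z\<in>U. \<psi> (\<phi> z) = z) \<and>
        (\<forall>g\<in>G. \<exists>a b c d. \<forall>\<^sub>F z in nhds 0. \<phi> (g z) = cmat a b c d (\<phi> z)))"

definition f1 :: "complex \<Rightarrow> C2 \<Rightarrow> C2" where
  "f1 l = (\<lambda>(z1, z2). (- z1, l * z2))"
definition f5 :: "complex \<Rightarrow> C2 \<Rightarrow> C2" where
  "f5 l = (\<lambda>(z1, z2). (- z1 + z2^2, l * z2))"
definition f6 :: "complex \<Rightarrow> C2 \<Rightarrow> C2" where
  "f6 l = (\<lambda>(z1, z2). (- z1 + l^2 * z2^2, l * z2))"

end

theory Submission
  imports Defs
begin

text \<open>Every generator has the form \<open>F\<^sub>c(z\<^sub>1, z\<^sub>2) = (-z\<^sub>1 + c z\<^sub>2\<^sup>2, \<lambda> z\<^sub>2)\<close> with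
  \<open>c \<in> {0, 1, \<lambda>\<^sup>2}\<close>. The quotients \<open>F\<^sub>c\<^sup>-\<^sup>1 \<circ> F\<^sub>d\<close> are the shears
  \<open>T\<^sub>a(z\<^sub>1, z\<^sub>2) = (z\<^sub>1 + a z\<^sub>2\<^sup>2, z\<^sub>2)\<close> with \<open>a = c - d\<close>, so \<open>G\<close> contains \<open>T\<^sub>a\<close> for every
  \<open>a \<in> \<int>[\<lambda>]\<close>; in particular \<open>G\<close> is infinite. Moreover \<open>F\<^sub>c \<circ> T\<^sub>a = T\<^sub>a \<circ> F\<^sub>d\<close> exactly
  when \<open>a (1 + \<lambda>\<^sup>2) = c - d\<close>: taking \<open>a = (d - c) \<lambda>\<^sup>2 \<in> \<int>[\<lambda>]\<close> conjugates any two
  generators, while \<open>F\<^sub>0\<close> and \<open>T\<^sub>1\<close> do not commute. Finally \<open>T\<^sub>1\<close> is tangent to the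
  identity without being the identity near 0, whereas a linearizing chart would conjugate it
  to its own derivative at 0, the identity.\<close>

definition shear :: "complex \<Rightarrow> C2 \<Rightarrow> C2" where
  "shear a = (\<lambda>(z1, z2). (z1 + a * z2^2, z2))"

definition twist :: "complex \<Rightarrow> complex \<Rightarrow> C2 \<Rightarrow> C2" where
  "twist l c = (\<lambda>(z1, z2). (- z1 + c * z2^2, l * z2))"

lemma cube_root_of_unity:
  fixes l :: complex
  assumes "l^2 + l + 1 = 0"
  shows "l^3 = 1"
proof -
  have "l^3 - 1 = (l - 1) * (l^2 + l + 1)" by algebra
  with assms show ?thesis by simp
qed

lemma shear_zero: "shear 0 = id"
  by (auto simp: shear_def)

lemma shear_comp_shear: "shear a \<circ> shear b = shear (a + b)"
  by (auto simp: shear_def algebra_simps)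

lemma inj_shear: "inj shear"
proof (rule injI)
  fix a b assume "shear a = shear b"
  then have "shear a (0, 1) = shear b (0, 1)" by simp
  then show "a = b" by (simp add: shear_def)
qed

lemma twist_comp_twist:
  assumes "\<mu> * \<nu> = 1"
  shows "twist \<mu> a \<circ> twist \<nu> b = shear (a * \<nu>^2 - b)"
  using assms by (auto simp: twist_def shear_def fun_eq_iff power_mult_distrib algebra_simps)

lemma inv_twist:
  fixes l :: complex
  assumes "l^3 = 1"
  shows "inv (twist l c) = twist (l^2) (c * l)" and "bij (twist l c)"
proof -
  have l: "l^2 * l = 1" "l * l^2 = 1"
    using assms by (simp_all add: power2_eq_square power3_eq_cube mult.assoc)
  have c: "c * l * l^2 - c = 0" "c * (l^2)^2 - c * l = 0"
    using l by (simp_all add: power2_eq_square mult.assoc)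
  have "twist (l^2) (c * l) \<circ> twist l c = id" "twist l c \<circ> twist (l^2) (c * l) = id"
    unfolding twist_comp_twist[OF l(1)] twist_comp_twist[OF l(2)] c shear_zero by (rule refl)+
  then show "inv (twist l c) = twist (l^2) (c * l)" "bij (twist l c)"
    by (simp_all add: inv_unique_comp o_bij)
qed

lemma inv_twist_comp_twist:
  fixes l :: complex
  assumes "l^3 = 1"
  shows "inv (twist l c) \<circ> twist l d = shear (c - d)"
proof -
  have l: "l^2 * l = 1"
    using assms by (simp add: power2_eq_square power3_eq_cube mult.assoc)
  have c: "c * l * l^2 = c" using l by (simp add: mult.commute)
  show ?thesis
    unfolding inv_twist[OF assms] twist_comp_twist[OF l] c by (rule refl)
qed

lemma twist_comp_shear_eq_iff:
  "twist l c \<circ> shear a = shear a \<circ> twist l d \<longleftrightarrow> a * (1 + l^2) = c - d"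
proof
  assume "twist l c \<circ> shear a = shear a \<circ> twist l d"
  then have "(twist l c \<circ> shear a) (0, 1) = (shear a \<circ> twist l d) (0, 1)" by simp
  then show "a * (1 + l^2) = c - d" by (simp add: twist_def shear_def algebra_simps)
next
  assume "a * (1 + l^2) = c - d"
  then show "twist l c \<circ> shear a = shear a \<circ> twist l d"
    by (auto simp: twist_def shear_def fun_eq_iff power_mult_distrib algebra_simps)
qed

lemma twist_product_eq_id:
  fixes l :: complex
  assumes "l^3 = 1"
  shows "twist l 0 \<circ> twist l 0 \<circ> twist l 0 \<circ> twist l 0 \<circ> twist l 1 \<circ> twist l (l^2) = id"
proof -
  have "l * (l * (l * (l * (l * l)))) = 1"
    using assms by (simp add: power3_eq_cube flip: mult.assoc)
  then show ?thesis by (auto simp: twist_def power_mult_distrib)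
qed

lemma gen_group_comp:
  assumes "g \<in> gen_group S" and "h \<in> gen_group S"
  shows "g \<circ> h \<in> gen_group S"
  using assms
proof (induction rule: gen_group.induct)
  case gen_id then show ?case by simp
next
  case (gen_mul g s) then show ?case by (metis comp_assoc gen_group.gen_mul)
next
  case (gen_inv g s) then show ?case by (metis comp_assoc gen_group.gen_inv)
qed

lemma generator_mem_gen_group: "s \<in> S \<Longrightarrow> s \<in> gen_group S"
  using gen_group.gen_mul[OF gen_group.gen_id] by simp

lemma inv_comp_generator_mem_gen_group: "s \<in> S \<Longrightarrow> t \<in> S \<Longrightarrow> inv s \<circ> t \<in> gen_group S"
  using gen_group.gen_inv[OF generator_mem_gen_group] by simp

lemma shear_of_nat_mult_mem:
  assumes "shear b \<in> gen_group S"
  shows "shear (of_nat n * b) \<in> gen_group S"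
proof (induction n)
  case 0 then show ?case by (metis shear_zero gen_group.gen_id mult_zero_left of_nat_0)
next
  case (Suc n)
  have "shear (of_nat (Suc n) * b) = shear b \<circ> shear (of_nat n * b)"
    by (simp add: shear_comp_shear algebra_simps)
  then show ?case using gen_group_comp[OF assms Suc.IH] by metis
qed

lemma shear_of_int_mult_mem:
  assumes "shear b \<in> gen_group S" and "shear (- b) \<in> gen_group S"
  shows "shear (of_int k * b) \<in> gen_group S"
proof (cases "k \<ge> 0")
  case True
  then have "of_int k * b = of_nat (nat k) * b" by simp
  with shear_of_nat_mult_mem[OF assms(1)] show ?thesis by metis
next
  case False
  then have "of_int k * b = of_nat (nat (- k)) * (- b)" by simp
  with shear_of_nat_mult_mem[OF assms(2)] show ?thesis by metis
qed

text \<open>For a primitive cube root of unity \<open>l\<close> this is \<open>\<int>[l]\<close>, in the basis \<open>1, l\<^sup>2\<close>.\<close>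

definition eisenstein_integers :: "complex \<Rightarrow> complex set" where
  "eisenstein_integers l = {of_int m + of_int n * l^2 | m n. True}"

lemma of_int_mem_eisenstein_integers: "of_int m \<in> eisenstein_integers l"
  unfolding eisenstein_integers_def by (rule CollectI, rule exI[of _ m], rule exI[of _ 0]) simp

lemma square_mem_eisenstein_integers: "l^2 \<in> eisenstein_integers l"
  unfolding eisenstein_integers_def by (rule CollectI, rule exI[of _ 0], rule exI[of _ 1]) simp

lemma eisenstein_integers_diff:
  assumes "x \<in> eisenstein_integers l" and "y \<in> eisenstein_integers l"
  shows "x - y \<in> eisenstein_integers l"
proof -
  obtain m n m' n' where "x = of_int m + of_int n * l^2" "y = of_int m' + of_int n' * l^2"
    using assms by (auto simp: eisenstein_integers_def)
  then have "x - y = of_int (m - m') + of_int (n - n') * l^2" by (simp add: algebra_simps)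
  then show ?thesis unfolding eisenstein_integers_def by blast
qed

lemma eisenstein_integers_mult_square:
  assumes "l^2 + l + 1 = 0" and "x \<in> eisenstein_integers l"
  shows "x * l^2 \<in> eisenstein_integers l"
proof -
  obtain m n where x: "x = of_int m + of_int n * l^2"
    using assms(2) by (auto simp: eisenstein_integers_def)
  have "x * l^2 = of_int (- n) + of_int (m - n) * l^2"
    unfolding x using assms(1) by (simp add: algebra_simps) algebra
  then show ?thesis unfolding eisenstein_integers_def by blast
qed

lemma shear_eisenstein_mem:
  assumes "shear 1 \<in> gen_group S" "shear (- 1) \<in> gen_group S"
    and "shear (l^2) \<in> gen_group S" "shear (- (l^2)) \<in> gen_group S"
    and "x \<in> eisenstein_integers l"
  shows "shear x \<in> gen_group S"
proof -
  obtain m n where x: "x = of_int m * 1 + of_int n * l^2"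
    using assms(5) by (auto simp: eisenstein_integers_def)
  have "shear (of_int m * 1) \<in> gen_group S" "shear (of_int n * l^2) \<in> gen_group S"
    using assms(1-4) by (blast intro: shear_of_int_mult_mem)+
  then have "shear (of_int m * 1) \<circ> shear (of_int n * l^2) \<in> gen_group S"
    by (rule gen_group_comp)
  then show ?thesis by (simp add: x shear_comp_shear)
qed

lemma cmat_has_derivative: "(cmat a b c d has_derivative cmat a b c d) (at x)"
proof -
  have cmat: "cmat a b c d = (\<lambda>z. (a * fst z + b * snd z, c * fst z + d * snd z))"
    by (auto simp: cmat_def)
  show ?thesis unfolding cmat by (rule derivative_eq_intros refl)+
qed

lemma has_derivative_transform_nhds:
  assumes "(f has_derivative f') (at x)" and "\<forall>\<^sub>F y in nhds x. f y = g y"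
  shows "(g has_derivative f') (at x)"
  using has_derivative_transform_eventually[of f f' x UNIV g] assms
  by (simp add: eventually_nhds_conv_at)

lemma linearization_of_tangent_to_identity:
  assumes d\<phi>: "(\<phi> has_derivative P) (at 0)" and d\<psi>: "(\<psi> has_derivative Q) (at (\<phi> 0))"
    and V: "open V" "\<phi> 0 \<in> V" and right_inverse: "\<forall>w\<in>V. \<phi> (\<psi> w) = w" and "\<psi> (\<phi> 0) = 0"
    and dg: "(g has_derivative id) (at 0)" and "g 0 = 0"
    and dL: "(L has_derivative L) (at (\<phi> 0))"
    and conj: "\<forall>\<^sub>F z in nhds 0. \<phi> (g z) = L (\<phi> z)"
  shows "L = id"
proof -
  have "((\<phi> \<circ> \<psi>) has_derivative P \<circ> Q) (at (\<phi> 0))"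
    using d\<phi> d\<psi> \<open>\<psi> (\<phi> 0) = 0\<close> by (auto intro: diff_chain_at)
  moreover have "((\<phi> \<circ> \<psi>) has_derivative id) (at (\<phi> 0))"
    by (rule has_derivative_transform_within_open[OF has_derivative_id V]) (use right_inverse in auto)
  ultimately have PQ: "P \<circ> Q = id" by (rule has_derivative_unique)
  have "((\<phi> \<circ> g) has_derivative P \<circ> id) (at 0)"
    using diff_chain_at[OF dg, of \<phi> P] d\<phi> \<open>g 0 = 0\<close> by simp
  then have "((L \<circ> \<phi>) has_derivative P) (at 0)"
    using conj by (auto intro: has_derivative_transform_nhds)
  moreover have "((L \<circ> \<phi>) has_derivative L \<circ> P) (at 0)"
    using d\<phi> dL by (auto intro: diff_chain_at)
  ultimately have LP: "L \<circ> P = P" by (metis has_derivative_unique)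
  have "L = (L \<circ> P) \<circ> Q" by (simp add: comp_assoc PQ)
  also have "\<dots> = id" by (simp add: LP PQ)
  finally show ?thesis .
qed

lemma not_linearizable_if_tangent_to_identity:
  assumes "g \<in> G" and dg: "(g has_derivative id) (at 0)" and "g 0 = 0"
    and not_id: "\<not> (\<forall>\<^sub>F z in nhds 0. g z = z)"
  shows "\<not> analytically_linearizable G"
proof
  assume "analytically_linearizable G"
  then obtain U \<phi> \<psi> where U: "open U" "0 \<in> U" and "\<phi> 0 = 0" and "holo2 \<phi> U" and "inj_on \<phi> U"
    and "open (\<phi> ` U)" and "holo2 \<psi> (\<phi> ` U)" and left_inverse: "\<forall>z\<in>U. \<psi> (\<phi> z) = z"
    and "\<forall>g\<in>G. \<exists>a b c d. \<forall>\<^sub>F z in nhds 0. \<phi> (g z) = cmat a b c d (\<phi> z)"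
    unfolding analytically_linearizable_def by blast
  with \<open>g \<in> G\<close> obtain a b c d where conj: "\<forall>\<^sub>F z in nhds 0. \<phi> (g z) = cmat a b c d (\<phi> z)"
    by blast
  obtain P where "(\<phi> has_derivative P) (at 0)"
    using \<open>holo2 \<phi> U\<close> U unfolding holo2_def by blast
  moreover obtain Q where "(\<psi> has_derivative Q) (at (\<phi> 0))"
    using \<open>holo2 \<psi> (\<phi> ` U)\<close> U unfolding holo2_def by blast
  moreover have "\<forall>w\<in>\<phi> ` U. \<phi> (\<psi> w) = w" using left_inverse by auto
  ultimately have "cmat a b c d = id"
    using linearization_of_tangent_to_identity[OF _ _ \<open>open (\<phi> ` U)\<close> _ _ _ dg \<open>g 0 = 0\<close>
        cmat_has_derivative conj] U left_inverse by blast
  with conj have "\<forall>\<^sub>F z in nhds 0. \<phi> (g z) = \<phi> z" by simp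
  moreover have "\<forall>\<^sub>F z in nhds 0. g z \<in> U"
    using has_derivative_continuous[OF dg] U \<open>g 0 = 0\<close>
    by (auto simp: eventually_nhds_conv_at isCont_def dest: topological_tendstoD)
  moreover have "\<forall>\<^sub>F z in nhds 0. z \<in> U" using U by (rule eventually_nhds_in_open)
  ultimately have "\<forall>\<^sub>F z in nhds 0. g z = z"
    by eventually_elim (use \<open>inj_on \<phi> U\<close> in \<open>auto simp: inj_on_def\<close>)
  with not_id show False by contradiction
qed

lemma shear_fixes_0: "shear a 0 = 0"
  by (simp add: shear_def zero_prod_def)

lemma twist_fixes_0: "twist l c 0 = 0"
  by (simp add: twist_def zero_prod_def)

lemma shear_has_derivative_id: "(shear a has_derivative id) (at 0)"
proof -
  have shear: "shear a = (\<lambda>z. (fst z + a * (snd z)^2, snd z))"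
    by (auto simp: shear_def)
  have "(shear a has_derivative (\<lambda>h. (fst h + a * (of_nat 2 * snd (0::C2) ^ (2 - 1) * snd h), snd h))) (at 0)"
    unfolding shear by (rule derivative_eq_intros refl)+ simp
  then show ?thesis by (simp add: id_def)
qed

lemma shear_not_eventually_id:
  assumes "a \<noteq> 0"
  shows "\<not> (\<forall>\<^sub>F z in nhds 0. shear a z = z)"
proof
  assume "\<forall>\<^sub>F z in nhds 0. shear a z = z"
  then obtain e where "e > 0" and e: "\<forall>z. dist z 0 < e \<longrightarrow> shear a z = z"
    unfolding eventually_nhds_metric by blast
  define z :: C2 where "z = (0, of_real (e / 2))"
  have "dist z 0 < e" using \<open>e > 0\<close> by (simp add: z_def dist_norm zero_prod_def norm_Pair)
  with e have "shear a z = z" by blast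
  moreover have "shear a z \<noteq> z" using assms \<open>e > 0\<close> by (simp add: z_def shear_def)
  ultimately show False by contradiction
qed

abbreviation twist_group :: "complex \<Rightarrow> (C2 \<Rightarrow> C2) set" where
  "twist_group l \<equiv> gen_group (twist l ` {0, 1, l^2})"

lemma shear_mem_twist_group:
  assumes l: "l^2 + l + 1 = 0" and "x \<in> eisenstein_integers l"
  shows "shear x \<in> twist_group l"
proof (rule shear_eisenstein_mem[OF _ _ _ _ assms(2)])
  have "shear (c - d) \<in> twist_group l" if "c \<in> {0, 1, l^2}" "d \<in> {0, 1, l^2}" for c d
  proof -
    have "inv (twist l c) \<circ> twist l d \<in> twist_group l"
      using that by (intro inv_comp_generator_mem_gen_group) auto
    then show ?thesis by (simp add: inv_twist_comp_twist[OF cube_root_of_unity[OF l]])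
  qed
  from this[of 1 0] this[of 0 1] this[of "l^2" 0] this[of 0 "l^2"]
  show "shear 1 \<in> twist_group l" "shear (- 1) \<in> twist_group l"
    "shear (l^2) \<in> twist_group l" "shear (- (l^2)) \<in> twist_group l"
    by simp_all
qed

lemma twists_conjugate_in_twist_group:
  assumes l: "l^2 + l + 1 = 0" and "c \<in> {0, 1, l^2}" "d \<in> {0, 1, l^2}"
  shows "\<exists>h\<in>twist_group l. twist l c \<circ> h = h \<circ> twist l d"
proof
  have "{0, 1, l^2} \<subseteq> eisenstein_integers l"
    using of_int_mem_eisenstein_integers[of 0 l] of_int_mem_eisenstein_integers[of 1 l]
      square_mem_eisenstein_integers by simp
  then show "shear ((d - c) * l^2) \<in> twist_group l"
    using assms by (intro shear_mem_twist_group eisenstein_integers_mult_square eisenstein_integers_diff) auto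
  have "(d - c) * l^2 * (1 + l^2) = c - d" using l by algebra
  then show "twist l c \<circ> shear ((d - c) * l^2) = shear ((d - c) * l^2) \<circ> twist l d"
    by (simp only: twist_comp_shear_eq_iff)
qed

lemma infinite_twist_group:
  assumes l: "l^2 + l + 1 = 0"
  shows "infinite (twist_group l)"
proof (rule infinite_super)
  show "range (shear \<circ> of_int) \<subseteq> twist_group l"
    using shear_mem_twist_group[OF l of_int_mem_eisenstein_integers] by auto
  have "inj (shear \<circ> of_int)" by (intro inj_compose[OF inj_shear]) (simp add: inj_def)
  then show "infinite (range (shear \<circ> of_int))"
    using infinite_UNIV_int finite_imageD by blast
qed

lemma twist_group_not_abelian:
  assumes l: "l^2 + l + 1 = 0"
  shows "\<exists>g\<in>twist_group l. \<exists>h\<in>twist_group l. g \<circ> h \<noteq> h \<circ> g"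
proof (intro bexI)
  show "twist l 0 \<circ> shear 1 \<noteq> shear 1 \<circ> twist l 0"
    using l by (simp add: twist_comp_shear_eq_iff) algebra
  show "twist l 0 \<in> twist_group l" by (simp add: generator_mem_gen_group)
  show "shear 1 \<in> twist_group l"
    using shear_mem_twist_group[OF l of_int_mem_eisenstein_integers[of 1]] by simp
qed

lemma twist_group_not_linearizable:
  assumes l: "l^2 + l + 1 = 0"
  shows "\<not> analytically_linearizable (twist_group l)"
proof (rule not_linearizable_if_tangent_to_identity)
  show "shear 1 \<in> twist_group l"
    using shear_mem_twist_group[OF l of_int_mem_eisenstein_integers[of 1]] by simp
qed (simp_all add: shear_has_derivative_id shear_fixes_0 shear_not_eventually_id)

lemma generators_product_eq_id:
  assumes "l^2 + l + 1 = 0"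
  shows "f1 l \<circ> f1 l \<circ> f1 l \<circ> f1 l \<circ> f5 l \<circ> f6 l = id"
  using twist_product_eq_id[OF cube_root_of_unity[OF assms]]
  by (simp add: f1_def f5_def f6_def twist_def)

lemma generators_eq_twists:
  "set [f1 l, f1 l, f1 l, f1 l, f5 l, f6 l] = twist l ` {0, 1, l^2}"
proof -
  have "f1 l = twist l 0" "f5 l = twist l 1" "f6 l = twist l (l^2)"
    by (auto simp: f1_def f5_def f6_def twist_def)
  then show ?thesis by auto
qed

theorem mainTheorem7:
  fixes l :: complex and fs :: "(C2 \<Rightarrow> C2) list" and G :: "(C2 \<Rightarrow> C2) set"
  assumes "l^2 + l + 1 = 0"
    and "fs = [f1 l, f1 l, f1 l, f1 l, f5 l, f6 l]"
    and "G = gen_group (set fs)"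
  shows "f1 l \<circ> f1 l \<circ> f1 l \<circ> f1 l \<circ> f5 l \<circ> f6 l = id
    \<and> (\<forall>i<6. \<forall>j<6. \<exists>h\<in>G. fs ! i \<circ> h = h \<circ> fs ! j)
    \<and> irreducible_group G
    \<and> infinite G
    \<and> (\<exists>g\<in>G. \<exists>h\<in>G. g \<circ> h \<noteq> h \<circ> g)
    \<and> \<not> analytically_linearizable G"
proof -
  note l = assms(1)
  have fs: "set fs = twist l ` {0, 1, l^2}"
    unfolding assms(2) by (rule generators_eq_twists)
  with assms(3) have G: "G = twist_group l" by simp
  have conj: "\<forall>f\<in>set fs. \<forall>g\<in>set fs. \<exists>h\<in>G. f \<circ> h = h \<circ> g"
    using twists_conjugate_in_twist_group[OF l] by (auto simp: fs G)
  have "length fs = 6" using assms(2) by simp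
  then have "\<forall>i<6. \<forall>j<6. \<exists>h\<in>G. fs ! i \<circ> h = h \<circ> fs ! j"
    using conj nth_mem by metis
  moreover have "irreducible_group G"
    unfolding irreducible_group_def
  proof (intro exI[of _ fs] conjI conj)
    show "\<forall>f\<in>set fs. bij f \<and> f 0 = 0"
      unfolding fs using inv_twist(2)[OF cube_root_of_unity[OF l]] twist_fixes_0 by auto
    show "foldr (\<circ>) fs id = id"
      using generators_product_eq_id[OF l] assms(2) by (simp add: comp_assoc)
  qed (use assms(2,3) in simp_all)
  ultimately show ?thesis
    using generators_product_eq_id infinite_twist_group twist_group_not_abelian
      twist_group_not_linearizable l G by blast
qed

end
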